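(* If $f\in\mathcal{C}_n$ and $r\in[-1,1]\setminus\{0\}$, then the function $f_r:\Gamma_+\to\mathbb{R}$ given by $f_r(x_1,\dots,x_n)=\big(f(x_1^r,\dots,x_n^r)\big)^{1/r}$ belongs to $\mathcal{C}_n$.
   Context: $\Gamma_+=\{x\in\mathbb{R}^n: x_i>0\ \forall i\}$. $\mathcal{C}_n$ is the class of functions $f:\Gamma_+\to\mathbb{R}$ which are $C^\infty$, homogeneous of degree one ($f(cx)=cf(x)$ for $c>0$), strictly monotone increasing ($\partial f/\partial x_i>0$ for each $i$), concave, and inverse-concave, meaning $f^*(x_1,\dots,x_n)=-f(x_1^{-1},\dots,x_n^{-1})$ is concave on $\Gamma_+$. *)

theory Defs
  imports "HOL-Analysis.Analysis"
begin

definition pos_cone :: "(real ^ 'n) set" where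
  "pos_cone = {x. \<forall>i. 0 < x $ i}"

fun Ck_on :: "nat \<Rightarrow> (real ^ 'n) set \<Rightarrow> (real ^ 'n \<Rightarrow> real) \<Rightarrow> bool" where
  "Ck_on 0 S f = continuous_on S f"
| "Ck_on (Suc k) S f =
     (\<exists>f'. (\<forall>x\<in>S. (f has_derivative f' x) (at x)) \<and>
           (\<forall>i. Ck_on k S (\<lambda>x. f' x (axis i 1))))"

definition smooth_on :: "(real ^ 'n) set \<Rightarrow> (real ^ 'n \<Rightarrow> real) \<Rightarrow> bool" where
  "smooth_on S f \<longleftrightarrow> (\<forall>k. Ck_on k S f)"

definition class_C :: "(real ^ 'n \<Rightarrow> real) \<Rightarrow> bool" where
  "class_C f \<longleftrightarrow>
     smooth_on pos_cone f \<and>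
     (\<forall>x\<in>pos_cone. \<forall>c>0. f (c *\<^sub>R x) = c * f x) \<and>
     (\<forall>x\<in>pos_cone. \<forall>i. \<exists>D. (f has_derivative D) (at x) \<and> D (axis i 1) > 0) \<and>
     concave_on pos_cone f \<and>
     concave_on pos_cone (\<lambda>x. - f (\<chi> i. inverse (x $ i)))"

end

theory Submission
  imports Defs
begin

(* Write F for f_r. Homogeneity and smoothness are inherited from f, and the partial
   derivatives of F are positive by the chain rule. A positive 1-homogeneous function on the
   cone is concave as soon as its superlevel set {F >= 1} is convex. For r > 0 this set is
   {x. f(x^r) >= 1}, convex because x -> f(x^r) is concave: f is concave and nondecreasing and
   t -> t^r is concave. For r < 0 it is {x. f(x^r) <= 1}, convex because
   f(x^r) = -f*(x^|r|) with f* = -f(1/.) concave and nondecreasing, which makes x -> f(x^r)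
   convex by the same argument. Inverse-concavity reduces to concavity through the identity
   F(1/x) = 1/f_(-r)(x): the reciprocal of a positive concave function is convex. *)

section \<open>Calculus of $C^k$ functions\<close>

lemma Ck_on_SucD: "Ck_on (Suc k) S F \<Longrightarrow> Ck_on k S F"
proof (induction k arbitrary: F)
  case 0
  then obtain F' where "\<forall>x\<in>S. (F has_derivative F' x) (at x)"
    by auto
  then show ?case
    by (auto intro!: continuous_at_imp_continuous_on has_derivative_continuous)
next
  case (Suc k)
  then obtain F' where "\<forall>x\<in>S. (F has_derivative F' x) (at x)"
    "\<forall>i. Ck_on (Suc k) S (\<lambda>x. F' x (axis i 1))"
    by auto
  with Suc.IH show ?case
    by auto
qed

lemma Ck_on_const: "Ck_on k S (\<lambda>x. c)"
  by (induction k arbitrary: c) (auto intro!: exI[of _ "\<lambda>x h. 0"])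

lemma Ck_on_add: "Ck_on k S F \<Longrightarrow> Ck_on k S G \<Longrightarrow> Ck_on k S (\<lambda>x. F x + G x)"
proof (induction k arbitrary: F G)
  case 0
  then show ?case
    by (simp add: continuous_on_add)
next
  case (Suc k)
  obtain F' where F': "\<forall>x\<in>S. (F has_derivative F' x) (at x)" "\<forall>i. Ck_on k S (\<lambda>x. F' x (axis i 1))"
    using Suc.prems by auto
  obtain G' where G': "\<forall>x\<in>S. (G has_derivative G' x) (at x)" "\<forall>i. Ck_on k S (\<lambda>x. G' x (axis i 1))"
    using Suc.prems by auto
  show ?case
    using F' G' Suc.IH by (auto intro!: exI[of _ "\<lambda>x h. F' x h + G' x h"] has_derivative_add)
qed

lemma Ck_on_sum:
  "finite I \<Longrightarrow> (\<And>j. j \<in> I \<Longrightarrow> Ck_on k S (F j)) \<Longrightarrow> Ck_on k S (\<lambda>x. \<Sum>j\<in>I. F j x)"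
  by (induction I rule: finite_induct) (auto intro: Ck_on_const Ck_on_add)

lemma Ck_on_mult: "Ck_on k S F \<Longrightarrow> Ck_on k S G \<Longrightarrow> Ck_on k S (\<lambda>x. F x * G x)"
proof (induction k arbitrary: F G)
  case 0
  then show ?case
    by (simp add: continuous_on_mult)
next
  case (Suc k)
  obtain F' where F': "\<forall>x\<in>S. (F has_derivative F' x) (at x)" "\<forall>i. Ck_on k S (\<lambda>x. F' x (axis i 1))"
    using Suc.prems by auto
  obtain G' where G': "\<forall>x\<in>S. (G has_derivative G' x) (at x)" "\<forall>i. Ck_on k S (\<lambda>x. G' x (axis i 1))"
    using Suc.prems by auto
  have "Ck_on k S F" "Ck_on k S G"
    using Suc.prems Ck_on_SucD by blast+
  then show ?case
    using F' G' Suc.IH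
    by (auto intro!: exI[of _ "\<lambda>x h. F x * G' x h + F' x h * G x"] has_derivative_mult Ck_on_add)
qed

lemma Ck_on_component: "Ck_on k S (\<lambda>x::real^'n. x $ j)"
proof (cases k)
  case 0
  then show ?thesis
    by (simp add: continuous_on_component continuous_on_id)
next
  case (Suc k')
  have "((\<lambda>x::real^'n. x $ j) has_derivative (\<lambda>v. v $ j)) (at x)" for x
    by (rule bounded_linear.has_derivative[OF bounded_linear_vec_nth]) auto
  then show ?thesis
    using Suc by (auto intro!: exI[of _ "\<lambda>x v. v $ j"] Ck_on_const)
qed

lemma Ck_on_compose_real:
  assumes "\<And>m t. t \<in> T \<Longrightarrow> (g m has_real_derivative g (Suc m) t) (at t)"
  shows "Ck_on k S F \<Longrightarrow> F ` S \<subseteq> T \<Longrightarrow> Ck_on k S (\<lambda>x. g m (F x))"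
proof (induction k arbitrary: F m)
  case 0
  have "continuous_on T (g m)"
    using assms by (auto intro!: continuous_at_imp_continuous_on DERIV_isCont)
  then show ?case
    using 0 by (auto intro: continuous_on_compose2)
next
  case (Suc k)
  obtain F' where F': "\<forall>x\<in>S. (F has_derivative F' x) (at x)" "\<forall>i. Ck_on k S (\<lambda>x. F' x (axis i 1))"
    using Suc.prems by auto
  have "((\<lambda>x. g m (F x)) has_derivative (\<lambda>h. g (Suc m) (F x) * F' x h)) (at x)" if "x \<in> S" for x
    using has_derivative_compose[OF F'(1)[rule_format, OF that] assms[of "F x" m, unfolded has_field_derivative_def]]
      that Suc.prems(2) by auto
  moreover have "Ck_on k S (\<lambda>x. g (Suc m) (F x))"
    using Suc.IH[OF Ck_on_SucD[OF Suc.prems(1)] Suc.prems(2)] .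
  ultimately show ?case
    using F'(2) by (auto intro!: exI[of _ "\<lambda>x h. g (Suc m) (F x) * F' x h"] Ck_on_mult)
qed

definition powr_higher_deriv :: "real \<Rightarrow> nat \<Rightarrow> real \<Rightarrow> real" where
  "powr_higher_deriv a m t = (\<Prod>j<m. a - real j) * t powr (a - real m)"

lemma has_real_derivative_powr_higher_deriv:
  "0 < t \<Longrightarrow> (powr_higher_deriv a m has_real_derivative powr_higher_deriv a (Suc m) t) (at t)"
  unfolding powr_higher_deriv_def
  by (rule derivative_eq_intros has_real_derivative_powr | simp)+ (simp add: algebra_simps diff_diff_eq)

lemma Ck_on_powr:
  assumes "Ck_on k S F" "F ` S \<subseteq> {0<..}"
  shows "Ck_on k S (\<lambda>x. F x powr a)"
proof -
  have "Ck_on k S (\<lambda>x. powr_higher_deriv a 0 (F x))"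
    by (rule Ck_on_compose_real[where T="{0<..}", OF _ assms]) (auto intro: has_real_derivative_powr_higher_deriv)
  then show ?thesis
    by (simp add: powr_higher_deriv_def)
qed

lemma basis_expansion_real: "(\<Sum>i\<in>UNIV. x $ i *\<^sub>R axis i 1) = (x :: real^'n)"
  using basis_expansion[of x] by (simp add: scalar_mult_eq_scaleR)

lemma has_derivative_vec_lambda:
  fixes G :: "'a::real_normed_vector \<Rightarrow> real^'n"
  assumes "\<And>j. ((\<lambda>x. G x $ j) has_derivative (\<lambda>v. G' v $ j)) (at x)"
  shows "(G has_derivative G') (at x)"
proof -
  have "((\<lambda>x. \<Sum>j\<in>UNIV. G x $ j *\<^sub>R (axis j 1 :: real^'n)) has_derivative
      (\<lambda>v. \<Sum>j\<in>UNIV. G' v $ j *\<^sub>R axis j 1)) (at x)"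
    by (intro has_derivative_sum has_derivative_scaleR_left assms)
  then show ?thesis
    unfolding basis_expansion_real .
qed

lemma linear_eq_sum_axis:
  fixes D :: "real^'n \<Rightarrow> real"
  assumes "linear D"
  shows "D v = (\<Sum>i\<in>UNIV. v $ i * D (axis i 1))"
proof -
  have "D v = D (\<Sum>i\<in>UNIV. v $ i *\<^sub>R axis i 1)"
    unfolding basis_expansion_real ..
  also have "\<dots> = (\<Sum>i\<in>UNIV. v $ i * D (axis i 1))"
    by (simp add: linear_sum[OF assms] linear_scale[OF assms])
  finally show ?thesis .
qed

lemma Ck_on_compose:
  fixes G :: "real^'m \<Rightarrow> real^'n"
  assumes "G ` S \<subseteq> T"
  shows "Ck_on k T F \<Longrightarrow> (\<And>j. Ck_on k S (\<lambda>x. G x $ j)) \<Longrightarrow> Ck_on k S (\<lambda>x. F (G x))"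
proof (induction k arbitrary: F)
  case 0
  have "continuous_on S G"
    using continuous_on_vec_lambda[of S "\<lambda>j x. G x $ j"] 0 by simp
  with 0 show ?case
    using assms by (auto intro: continuous_on_compose2)
next
  case (Suc k)
  obtain F' where F': "\<forall>y\<in>T. (F has_derivative F' y) (at y)" "\<forall>j. Ck_on k T (\<lambda>y. F' y (axis j 1))"
    using Suc.prems(1) by auto
  have "\<forall>j. \<exists>G'. (\<forall>x\<in>S. ((\<lambda>x. G x $ j) has_derivative G' x) (at x)) \<and>
      (\<forall>i. Ck_on k S (\<lambda>x. G' x (axis i 1)))"
    using Suc.prems(2) by simp
  from choice[OF this] obtain G' where G': "\<And>j. \<forall>x\<in>S. ((\<lambda>x. G x $ j) has_derivative G' j x) (at x)"
    "\<And>j i. Ck_on k S (\<lambda>x. G' j x (axis i 1))"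
    by blast
  define D where "D x v = (\<Sum>j\<in>UNIV. G' j x v * F' (G x) (axis j 1))" for x v
  have "((\<lambda>x. F (G x)) has_derivative D x) (at x)" if "x \<in> S" for x
  proof -
    have DG: "(G has_derivative (\<lambda>v. \<chi> j. G' j x v)) (at x)"
      by (rule has_derivative_vec_lambda) (use G' that in simp)
    have F'Gx: "(F has_derivative F' (G x)) (at (G x))"
      using F'(1) assms that by blast
    have "F' (G x) (\<chi> j. G' j x v) = D x v" for v
      using linear_eq_sum_axis[OF has_derivative_linear[OF F'Gx], of "\<chi> j. G' j x v"] by (simp add: D_def)
    then show ?thesis
      using has_derivative_compose[OF DG F'Gx] by (simp add: o_def)
  qed
  moreover have "Ck_on k S (\<lambda>x. D x (axis i 1))" for i
  proof -
    have "Ck_on k S (\<lambda>x. G x $ j)" for j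
      using Suc.prems(2) Ck_on_SucD by blast
    then have "Ck_on k S (\<lambda>x. F' (G x) (axis j 1))" for j
      using Suc.IH F'(2) by blast
    then show ?thesis
      unfolding D_def using G'(2) by (intro Ck_on_sum Ck_on_mult) auto
  qed
  ultimately show ?case
    by auto
qed

section \<open>Basic properties of the class $\mathcal{C}_n$\<close>

lemma convex_pos_cone: "convex (pos_cone :: (real^'n) set)"
  unfolding pos_cone_def
  by (rule convex_box_cart) (simp add: greaterThan_def[symmetric])

lemma scaleR_in_pos_cone: "x \<in> pos_cone \<Longrightarrow> 0 < c \<Longrightarrow> c *\<^sub>R x \<in> pos_cone"
  by (simp add: pos_cone_def)

lemma powr_in_pos_cone: "x \<in> pos_cone \<Longrightarrow> (\<chi> i. x $ i powr p) \<in> pos_cone"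
  by (simp add: pos_cone_def less_imp_neq[symmetric])

lemma homogeneous_has_derivative_self:
  fixes f :: "'a::real_normed_vector \<Rightarrow> real"
  assumes "(f has_derivative D) (at x)" "\<And>c. 0 < c \<Longrightarrow> f (c *\<^sub>R x) = c * f x"
  shows "D x = f x"
proof -
  have "((\<lambda>c::real. c *\<^sub>R x) has_derivative (\<lambda>h. h *\<^sub>R x)) (at 1)"
    by (auto intro!: derivative_eq_intros)
  from has_derivative_compose[OF this, of f D]
  have "((\<lambda>c. f (c *\<^sub>R x)) has_derivative (\<lambda>h. D (h *\<^sub>R x))) (at 1)"
    using assms(1) by simp
  then have "((\<lambda>c. c * f x) has_derivative (\<lambda>h. D (h *\<^sub>R x))) (at 1)"
    by (rule has_derivative_transform_within_open[where s="{0<..}"]) (use assms(2) in auto)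
  moreover have "((\<lambda>c. c * f x) has_derivative (\<lambda>h. h * f x)) (at 1)"
    by (auto intro!: derivative_eq_intros)
  ultimately have "(\<lambda>h. D (h *\<^sub>R x)) = (\<lambda>h. h * f x)"
    by (rule has_derivative_unique)
  then show ?thesis
    by (metis mult_1 scaleR_one)
qed

lemma class_C_has_derivative:
  assumes "class_C f" "x \<in> pos_cone"
  obtains D where "(f has_derivative D) (at x)" "\<And>i. 0 < D (axis i 1)"
proof -
  have "Ck_on 1 pos_cone f"
    using assms(1) by (simp add: class_C_def smooth_on_def)
  then obtain D where D: "(f has_derivative D) (at x)"
    using assms(2) by auto
  have "0 < D (axis i 1)" for i
  proof -
    obtain D' where "(f has_derivative D') (at x)" "0 < D' (axis i 1)"
      using assms unfolding class_C_def by blast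
    then show ?thesis
      using has_derivative_unique[OF D] by auto
  qed
  with D show ?thesis
    using that by blast
qed

lemma class_C_pos:
  assumes "class_C f" "x \<in> pos_cone"
  shows "0 < f x"
proof -
  obtain D where D: "(f has_derivative D) (at x)" "\<And>i. 0 < D (axis i 1)"
    using class_C_has_derivative[OF assms] by blast
  have "f x = D x"
    using homogeneous_has_derivative_self[OF D(1)] assms by (simp add: class_C_def)
  also have "\<dots> = (\<Sum>i\<in>UNIV. x $ i * D (axis i 1))"
    by (rule linear_eq_sum_axis[OF has_derivative_linear[OF D(1)]])
  also have "\<dots> > 0"
    using D(2) assms(2) by (intro sum_pos) (auto simp: pos_cone_def)
  finally show ?thesis .
qed

lemma class_C_mono_on:
  assumes "class_C f"
  shows "mono_on pos_cone f"
proof (rule mono_onI)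
  fix x y :: "real^'a"
  assume x: "x \<in> pos_cone" and y: "y \<in> pos_cone" and "x \<le> y"
  let ?g = "\<lambda>t. x + t *\<^sub>R (y - x)"
  have g: "?g t \<in> pos_cone" if "0 \<le> t" "t \<le> 1" for t
  proof -
    have "?g t = (1 - t) *\<^sub>R x + t *\<^sub>R y"
      by (simp add: algebra_simps)
    then show ?thesis
      using convex_pos_cone[unfolded convex_def] x y that by auto
  qed
  have "f (?g 0) \<le> f (?g 1)"
  proof (rule DERIV_nonneg_imp_nondecreasing[of 0 1 "\<lambda>t. f (?g t)"])
    fix t :: real
    assume "0 \<le> t" "t \<le> 1"
    then obtain D where D: "(f has_derivative D) (at (?g t))" "\<And>i. 0 < D (axis i 1)"
      using class_C_has_derivative[OF assms g] by blast
    have "(?g has_derivative (\<lambda>h. h *\<^sub>R (y - x))) (at t)"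
      by (auto intro!: derivative_eq_intros)
    from has_derivative_compose[OF this D(1)]
    have "((\<lambda>t. f (?g t)) has_derivative (\<lambda>h. h * D (y - x))) (at t)"
      using linear_scale[OF has_derivative_linear[OF D(1)]] by simp
    then have "((\<lambda>t. f (?g t)) has_real_derivative D (y - x)) (at t)"
      by (simp add: has_field_derivative_def mult.commute[of _ "D (y - x)"])
    moreover have "0 \<le> D (y - x)"
      using linear_eq_sum_axis[OF has_derivative_linear[OF D(1)], of "y - x"] D(2) \<open>x \<le> y\<close>
      by (simp add: sum_nonneg less_imp_le less_eq_vec_def)
    ultimately show "\<exists>d. ((\<lambda>t. f (?g t)) has_real_derivative d) (at t) \<and> 0 \<le> d"
      by blast
  qed simp
  then show "f x \<le> f y"
    by simp
qed

lemma concave_on_powr: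
  assumes "0 \<le> p" "p \<le> 1"
  shows "concave_on {0<..} (\<lambda>t::real. t powr p)"
  unfolding concave_on_def
proof (rule convex_on_realI[where f'="\<lambda>t. - (p * t powr (p - 1))"])
  show "connected {0::real<..}"
    by simp
  show "((\<lambda>t. - (t powr p)) has_real_derivative - (p * t powr (p - 1))) (at t)" if "t \<in> {0<..}" for t
    using that by (intro DERIV_minus has_real_derivative_powr) simp
  show "- (p * s powr (p - 1)) \<le> - (p * t powr (p - 1))" if "s \<in> {0<..}" "t \<in> {0<..}" "s \<le> t" for s t
    using that assms powr_mono2'[of "p - 1" s t] by (simp add: mult_left_mono)
qed

lemma concave_on_mono_compose_powr:
  fixes g :: "real^'n \<Rightarrow> real"
  assumes "concave_on pos_cone g" "mono_on pos_cone g" "0 \<le> p" "p \<le> 1"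
  shows "concave_on pos_cone (\<lambda>x. g (\<chi> i. x $ i powr p))"
  unfolding concave_on_iff
proof (intro conjI convex_pos_cone ballI allI impI)
  fix x y :: "real^'n" and u v :: real
  assume x: "x \<in> pos_cone" and y: "y \<in> pos_cone" and uv: "0 \<le> u" "0 \<le> v" "u + v = 1"
  let ?m = "u *\<^sub>R (\<chi> i. x $ i powr p) + v *\<^sub>R (\<chi> i. y $ i powr p)"
  have "u * g (\<chi> i. x $ i powr p) + v * g (\<chi> i. y $ i powr p) \<le> g ?m"
    using assms(1) powr_in_pos_cone[OF x] powr_in_pos_cone[OF y] uv unfolding concave_on_iff by blast
  also have "\<dots> \<le> g (\<chi> i. (u *\<^sub>R x + v *\<^sub>R y) $ i powr p)"
  proof (rule mono_onD[OF assms(2)])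
    show "?m \<in> pos_cone"
      using convex_pos_cone[unfolded convex_def] powr_in_pos_cone x y uv by blast
    show "(\<chi> i. (u *\<^sub>R x + v *\<^sub>R y) $ i powr p) \<in> pos_cone"
      using convex_pos_cone[unfolded convex_def] x y uv by (blast intro: powr_in_pos_cone)
    have "u * a powr p + v * b powr p \<le> (u * a + v * b) powr p" if "0 < a" "0 < b" for a b
      using concave_on_powr[OF assms(3,4)] that uv unfolding concave_on_iff by auto
    then show "?m \<le> (\<chi> i. (u *\<^sub>R x + v *\<^sub>R y) $ i powr p)"
      using x y by (simp add: less_eq_vec_def pos_cone_def)
  qed
  finally show "u * g (\<chi> i. x $ i powr p) + v * g (\<chi> i. y $ i powr p)
      \<le> g (\<chi> i. (u *\<^sub>R x + v *\<^sub>R y) $ i powr p)" .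
qed

lemma class_C_concave_on_powr_compose:
  assumes "class_C f" "0 \<le> p" "p \<le> 1"
  shows "concave_on pos_cone (\<lambda>x. f (\<chi> i. x $ i powr p))"
  using assms(1) by (intro concave_on_mono_compose_powr class_C_mono_on assms) (simp add: class_C_def)

lemma class_C_convex_on_powr_compose:
  assumes "class_C f" "0 \<le> p" "p \<le> 1"
  shows "convex_on pos_cone (\<lambda>x. f (\<chi> i. x $ i powr - p))"
proof -
  let ?g = "\<lambda>z. - f (\<chi> i. inverse (z $ i))"
  have "concave_on pos_cone ?g"
    using assms(1) by (simp add: class_C_def)
  moreover have "mono_on pos_cone ?g"
  proof (rule mono_onI)
    fix z w :: "real^'a"
    assume "z \<in> pos_cone" "w \<in> pos_cone" "z \<le> w"
    then show "?g z \<le> ?g w"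
      using mono_onD[OF class_C_mono_on[OF assms(1)], of "\<chi> i. inverse (w $ i)" "\<chi> i. inverse (z $ i)"]
      by (simp add: pos_cone_def less_eq_vec_def le_imp_inverse_le)
  qed
  ultimately have "concave_on pos_cone (\<lambda>x. ?g (\<chi> i. x $ i powr p))"
    using assms(2,3) by (rule concave_on_mono_compose_powr)
  then show ?thesis
    by (simp add: convex_on_iff_concave powr_minus)
qed

section \<open>Concavity of homogeneous functions via superlevel sets\<close>

lemma convex_sublevel_set:
  assumes "convex_on C g"
  shows "convex {x \<in> C. g x \<le> a}"
  unfolding convex_def
proof (intro ballI allI impI)
  fix x y and u v :: real
  assume x: "x \<in> {x \<in> C. g x \<le> a}" and y: "y \<in> {x \<in> C. g x \<le> a}" and uv: "0 \<le> u" "0 \<le> v" "u + v = 1"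
  have "u *\<^sub>R x + v *\<^sub>R y \<in> C"
    using convex_on_imp_convex[OF assms] x y uv unfolding convex_def by blast
  moreover have "g (u *\<^sub>R x + v *\<^sub>R y) \<le> u * g x + v * g y"
    using assms x y uv unfolding convex_on_def by blast
  moreover have "u * g x + v * g y \<le> u * a + v * a"
    using x y uv by (intro add_mono mult_left_mono) auto
  moreover have "u * a + v * a = a"
    using uv by (metis distrib_right mult_1)
  ultimately show "u *\<^sub>R x + v *\<^sub>R y \<in> {x \<in> C. g x \<le> a}"
    by simp
qed

lemma convex_superlevel_set: "concave_on C g \<Longrightarrow> convex {x \<in> C. a \<le> g x}"
  using convex_sublevel_set[of C "\<lambda>x. - g x" "- a"] by (simp add: concave_on_def)

lemma convex_combination_pos: "0 < a \<Longrightarrow> 0 < b \<Longrightarrow> 0 \<le> u \<Longrightarrow> 0 \<le> v \<Longrightarrow> u + v = 1 \<Longrightarrow> 0 < u * a + v * (b::real)"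
  using convex_bound_lt[of "- a" 0 "- b" u v] by simp

lemma concave_on_if_convex_superlevel:
  fixes K :: "'a::real_vector \<Rightarrow> real"
  assumes cone: "convex C" "\<And>x c. x \<in> C \<Longrightarrow> 0 < c \<Longrightarrow> c *\<^sub>R x \<in> C"
    and pos: "\<And>x. x \<in> C \<Longrightarrow> 0 < K x"
    and hom: "\<And>x c. x \<in> C \<Longrightarrow> 0 < c \<Longrightarrow> K (c *\<^sub>R x) = c * K x"
    and level: "convex {x \<in> C. 1 \<le> K x}"
  shows "concave_on C K"
  unfolding concave_on_iff
proof (intro conjI cone(1) ballI allI impI)
  fix x y :: 'a and u v :: real
  assume x: "x \<in> C" and y: "y \<in> C" and uv: "0 \<le> u" "0 \<le> v" "u + v = 1"
  define \<sigma> where "\<sigma> = u * K x + v * K y"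
  have \<sigma>: "0 < \<sigma>"
    unfolding \<sigma>_def using pos x y uv by (intro convex_combination_pos)
  have normalized: "inverse (K z) *\<^sub>R z \<in> {x \<in> C. 1 \<le> K x}" if "z \<in> C" for z
  proof -
    have "K z \<noteq> 0"
      using pos[OF that] by simp
    then show ?thesis
      using cone(2)[OF that] hom[OF that] pos[OF that] by simp
  qed
  have "0 \<le> u * K x / \<sigma>" "0 \<le> v * K y / \<sigma>" "u * K x / \<sigma> + v * K y / \<sigma> = 1"
    using uv pos[OF x] pos[OF y] \<sigma> by (auto simp: \<sigma>_def add_divide_distrib[symmetric])
  then have "(u * K x / \<sigma>) *\<^sub>R (inverse (K x) *\<^sub>R x) + (v * K y / \<sigma>) *\<^sub>R (inverse (K y) *\<^sub>R y)
      \<in> {x \<in> C. 1 \<le> K x}"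
    using level[unfolded convex_def] normalized[OF x] normalized[OF y] by blast
  moreover have "(u * K x / \<sigma>) *\<^sub>R (inverse (K x) *\<^sub>R x) + (v * K y / \<sigma>) *\<^sub>R (inverse (K y) *\<^sub>R y)
      = inverse \<sigma> *\<^sub>R (u *\<^sub>R x + v *\<^sub>R y)"
    using pos[OF x] pos[OF y] by (simp add: scaleR_add_right field_simps)
  ultimately have w: "inverse \<sigma> *\<^sub>R (u *\<^sub>R x + v *\<^sub>R y) \<in> C" "1 \<le> K (inverse \<sigma> *\<^sub>R (u *\<^sub>R x + v *\<^sub>R y))"
    by simp_all
  have "K (u *\<^sub>R x + v *\<^sub>R y) = \<sigma> * K (inverse \<sigma> *\<^sub>R (u *\<^sub>R x + v *\<^sub>R y))"
    using hom[OF w(1) \<sigma>] \<sigma> by simp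
  then show "u * K x + v * K y \<le> K (u *\<^sub>R x + v *\<^sub>R y)"
    using mult_left_mono[OF w(2), of \<sigma>] \<sigma> by (simp add: \<sigma>_def)
qed

lemma convex_on_inverse_concave:
  assumes "concave_on C K" "\<And>x. x \<in> C \<Longrightarrow> 0 < K x"
  shows "convex_on C (\<lambda>x. inverse (K x))"
  unfolding convex_on_def
proof (intro conjI ballI allI impI)
  show "convex C"
    using assms(1) by (rule concave_on_imp_convex)
  fix x y and u v :: real
  assume x: "x \<in> C" and y: "y \<in> C" and uv: "0 \<le> u" "0 \<le> v" "u + v = 1"
  have "u * K x + v * K y \<le> K (u *\<^sub>R x + v *\<^sub>R y)"
    using assms(1) x y uv unfolding concave_on_iff by blast
  then have "inverse (K (u *\<^sub>R x + v *\<^sub>R y)) \<le> inverse (u * K x + v * K y)"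
    using assms(2) x y uv by (intro le_imp_inverse_le convex_combination_pos)
  also have "\<dots> \<le> u * inverse (K x) + v * inverse (K y)"
    using convex_on_inverse[of "{0<..}"] assms(2) x y uv unfolding convex_on_def by simp
  finally show "inverse (K (u *\<^sub>R x + v *\<^sub>R y)) \<le> u * inverse (K x) + v * inverse (K y)" .
qed

section \<open>The power transform $f_r$\<close>

definition power_transform :: "(real^'n \<Rightarrow> real) \<Rightarrow> real \<Rightarrow> real^'n \<Rightarrow> real" where
  "power_transform f r = (\<lambda>x. f (\<chi> i. x $ i powr r) powr (1 / r))"

lemma power_transform_pos:
  assumes "class_C f" "x \<in> pos_cone"
  shows "0 < power_transform f r x"
proof -
  have "0 < f (\<chi> i. x $ i powr r)"
    using class_C_pos[OF assms(1) powr_in_pos_cone[OF assms(2)]] .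
  then show ?thesis
    by (simp add: power_transform_def)
qed

lemma power_transform_homogeneous:
  assumes "class_C f" "r \<noteq> 0" "x \<in> pos_cone" "0 < c"
  shows "power_transform f r (c *\<^sub>R x) = c * power_transform f r x"
proof -
  have "(\<chi> i. (c *\<^sub>R x) $ i powr r) = c powr r *\<^sub>R (\<chi> i. x $ i powr r)"
    using assms(3,4) by (simp add: vec_eq_iff pos_cone_def powr_mult)
  then have "f (\<chi> i. (c *\<^sub>R x) $ i powr r) = c powr r * f (\<chi> i. x $ i powr r)"
    using assms(1) powr_in_pos_cone[OF assms(3)] assms(4) by (simp add: class_C_def)
  then show ?thesis
    using class_C_pos[OF assms(1) powr_in_pos_cone[OF assms(3)]] assms(2,4)
    by (simp add: power_transform_def powr_mult powr_powr)
qed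

lemma power_transform_inverse:
  "power_transform f r (\<chi> i. inverse (x $ i)) = inverse (power_transform f (- r) x)"
  by (simp add: power_transform_def inverse_powr powr_minus)

lemma one_le_powr_iff: "0 < y \<Longrightarrow> 1 \<le> y powr e \<longleftrightarrow> 0 \<le> e * ln (y::real)"
  by (simp add: powr_def)

lemma concave_on_power_transform:
  assumes "class_C f" "-1 \<le> r" "r \<le> 1" "r \<noteq> 0"
  shows "concave_on pos_cone (power_transform f r)"
proof (rule concave_on_if_convex_superlevel[OF convex_pos_cone scaleR_in_pos_cone])
  show "0 < power_transform f r x" if "x \<in> pos_cone" for x
    using power_transform_pos[OF assms(1) that] .
  show "power_transform f r (c *\<^sub>R x) = c * power_transform f r x" if "x \<in> pos_cone" "0 < c" for x c
    using power_transform_homogeneous[OF assms(1,4) that] .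
  let ?h = "\<lambda>x. f (\<chi> i. x $ i powr r)"
  have h_pos: "0 < ?h x" if "x \<in> pos_cone" for x
    using class_C_pos[OF assms(1) powr_in_pos_cone[OF that]] .
  show "convex {x \<in> pos_cone. 1 \<le> power_transform f r x}"
  proof (cases "0 < r")
    case True
    then have "{x \<in> pos_cone. 1 \<le> power_transform f r x} = {x \<in> pos_cone. 1 \<le> ?h x}"
      using h_pos by (auto simp: power_transform_def one_le_powr_iff zero_le_divide_iff ln_ge_zero_iff)
    then show ?thesis
      using convex_superlevel_set[OF class_C_concave_on_powr_compose[OF assms(1)]] True assms(3)
      by simp
  next
    case False
    then have "{x \<in> pos_cone. 1 \<le> power_transform f r x} = {x \<in> pos_cone. ?h x \<le> 1}"
      using h_pos assms(4) by (auto simp: power_transform_def one_le_powr_iff zero_le_divide_iff ln_le_zero_iff)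
    then show ?thesis
      using convex_sublevel_set[OF class_C_convex_on_powr_compose[OF assms(1), of "- r"]] False assms(2)
      by simp
  qed
qed

lemma has_derivative_powr_components:
  fixes x :: "real^'n"
  assumes "x \<in> pos_cone"
  shows "((\<lambda>z. \<chi> i. z $ i powr r) has_derivative (\<lambda>v. \<chi> i. r * x $ i powr (r - 1) * v $ i)) (at x)"
proof (rule has_derivative_vec_lambda)
  fix i
  have "((\<lambda>z::real^'n. z $ i) has_derivative (\<lambda>v. v $ i)) (at x)"
    by (rule bounded_linear.has_derivative[OF bounded_linear_vec_nth]) auto
  moreover have "((\<lambda>t. t powr r) has_real_derivative r * x $ i powr (r - 1)) (at (x $ i))"
    using assms by (intro has_real_derivative_powr) (simp add: pos_cone_def)
  ultimately show "((\<lambda>z. (\<chi> i. z $ i powr r) $ i) has_derivative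
      (\<lambda>v. (\<chi> i. r * x $ i powr (r - 1) * v $ i) $ i)) (at x)"
    using has_derivative_compose by (simp add: has_field_derivative_def)
qed

lemma power_transform_has_derivative:
  assumes "class_C f" "r \<noteq> 0" "x \<in> pos_cone"
  obtains D where "(power_transform f r has_derivative D) (at x)" "\<And>i. 0 < D (axis i 1)"
proof -
  let ?y = "\<chi> i. x $ i powr r"
  let ?c = "\<lambda>i. r * x $ i powr (r - 1)"
  have y_pos: "0 < f ?y"
    using class_C_pos[OF assms(1) powr_in_pos_cone[OF assms(3)]] .
  obtain Df where Df: "(f has_derivative Df) (at ?y)" "\<And>i. 0 < Df (axis i 1)"
    using class_C_has_derivative[OF assms(1) powr_in_pos_cone[OF assms(3)]] by blast
  from has_derivative_compose[OF has_derivative_powr_components[OF assms(3)] Df(1)]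
  have "((\<lambda>z. f (\<chi> i. z $ i powr r)) has_derivative (\<lambda>v. Df (\<chi> i. ?c i * v $ i))) (at x)"
    by (simp add: o_def)
  moreover have "((\<lambda>t. t powr (1 / r)) has_real_derivative (1 / r) * f ?y powr (1 / r - 1)) (at (f ?y))"
    using y_pos by (rule has_real_derivative_powr)
  ultimately have "(power_transform f r has_derivative
      (\<lambda>v. (1 / r) * f ?y powr (1 / r - 1) * Df (\<chi> i. ?c i * v $ i))) (at x)"
    unfolding power_transform_def has_field_derivative_def by (rule has_derivative_compose)
  moreover have "0 < (1 / r) * f ?y powr (1 / r - 1) * Df (\<chi> j. ?c j * axis i 1 $ j)" for i
  proof -
    have "(\<chi> j. ?c j * axis i 1 $ j) = ?c i *\<^sub>R axis i 1"
      by (simp add: vec_eq_iff axis_def)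
    then have "(1 / r) * f ?y powr (1 / r - 1) * Df (\<chi> j. ?c j * axis i 1 $ j)
        = f ?y powr (1 / r - 1) * x $ i powr (r - 1) * Df (axis i 1)"
      using linear_scale[OF has_derivative_linear[OF Df(1)]] assms(2) by simp
    also have "\<dots> > 0"
    proof -
      have "0 < x $ i"
        using assms(3) by (simp add: pos_cone_def)
      then show ?thesis
        using y_pos Df(2)[of i] by (intro mult_pos_pos) auto
    qed
    finally show ?thesis .
  qed
  ultimately show ?thesis
    using that by blast
qed

lemma smooth_on_power_transform:
  assumes "class_C f"
  shows "smooth_on pos_cone (power_transform f r)"
  unfolding smooth_on_def
proof
  fix k
  have "Ck_on k pos_cone f"
    using assms by (simp add: class_C_def smooth_on_def)
  moreover have "Ck_on k pos_cone (\<lambda>x. x $ i powr r)" for i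
    by (rule Ck_on_powr[OF Ck_on_component]) (auto simp: pos_cone_def)
  ultimately have "Ck_on k pos_cone (\<lambda>x. f (\<chi> i. x $ i powr r))"
    using Ck_on_compose[of "\<lambda>x. \<chi> i. x $ i powr r" pos_cone pos_cone k f] powr_in_pos_cone by auto
  then show "Ck_on k pos_cone (power_transform f r)"
    unfolding power_transform_def
    by (rule Ck_on_powr) (use class_C_pos[OF assms powr_in_pos_cone] in auto)
qed

theorem theorem2p3:
  fixes f :: "real ^ 'n \<Rightarrow> real" and r :: real
  assumes "class_C f"
    and "-1 \<le> r" and "r \<le> 1" and "r \<noteq> 0"
  shows "class_C (\<lambda>x. (f (\<chi> i. (x $ i) powr r)) powr (1 / r))"
proof -
  have "-1 \<le> - r" "- r \<le> 1" "- r \<noteq> 0"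
    using assms(2-4) by auto
  then have "convex_on pos_cone (\<lambda>x. inverse (power_transform f (- r) x))"
    using assms(1) by (intro convex_on_inverse_concave concave_on_power_transform power_transform_pos)
  then have inverse_concave: "concave_on pos_cone (\<lambda>x. - power_transform f r (\<chi> i. inverse (x $ i)))"
    by (simp add: convex_on_iff_concave power_transform_inverse)
  have partials: "\<exists>D. (power_transform f r has_derivative D) (at x) \<and> 0 < D (axis i 1)"
    if "x \<in> pos_cone" for x i
    using power_transform_has_derivative[OF assms(1,4) that] by metis
  show ?thesis
    unfolding class_C_def power_transform_def[symmetric]
    using smooth_on_power_transform[OF assms(1)] power_transform_homogeneous[OF assms(1,4)]
      partials concave_on_power_transform[OF assms] inverse_concave
    by blast
qed

end
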